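(* Let $C$ be a finite acyclic category and let $F\colon C\to C$ be a functor. If $\mathrm{sd}(F)\colon\mathrm{sd}(C)\to\mathrm{sd}(C)$ fixes an element $\sigma\in\mathrm{sd}(C)$, i.e. $\mathrm{sd}(F)(\sigma)=\sigma$, then $\mathrm{sd}(F)(\tau)=\tau$ for all $\tau\le\sigma$ in $\mathrm{sd}(C)$.
   Context: An acyclic category is a small category in which only identities are invertible and the only endomorphisms are identities; finite means finitely many morphisms. The nerve $\Delta(C)$ is the regular trisp with vertices the objects of $C$ and one $k$-simplex for each chain $x_0\xrightarrow{\alpha_1}x_1\to\cdots\xrightarrow{\alpha_k}x_k$ of $k\ge1$ composable non-identity morphisms (a $0$-simplex being an object). The faces of such a simplex are the chains obtained by choosing a nonempty subset of the vertices $x_0,\dots,x_k$ (in order) and composing the morphisms between consecutive chosen vertices (e.g. deleting $x_0$, deleting $x_k$, or replacing $\alpha_j,\alpha_{j+1}$ by $\alpha_{j+1}\circ\alpha_j$). $\mathrm{sd}(C)$ is the face poset of $\Delta(C)$: its elements are the simplices, with $\tau\le\sigma$ iff $\tau$ is a face of $\sigma$. For a functor $F$, $\mathrm{sd}(F)$ sends the chain $x_0\xrightarrow{\alpha_1}\cdots\xrightarrow{\alpha_k}x_k$ to the chain $F(x_0)\xrightarrow{F(\alpha_1)}\cdots\xrightarrow{F(\alpha_k)}F(x_k)$ (the simplex of $\Delta(C)$ it determines). *)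

theory Defs
  imports Main
begin

text \<open>Small categories given explicitly by object set, morphism set, domain, codomain,
identities and composition (Comp g f = g o f, defined when Cod f = Dom g).\<close>

record ('o,'m) cat =
  Obj  :: "'o set"
  Mor  :: "'m set"
  Dom  :: "'m \<Rightarrow> 'o"
  Cod  :: "'m \<Rightarrow> 'o"
  Id   :: "'o \<Rightarrow> 'm"
  Comp :: "'m \<Rightarrow> 'm \<Rightarrow> 'm"

definition category :: "('o,'m) cat \<Rightarrow> bool" where
  "category C \<longleftrightarrow>
     (\<forall>f\<in>Mor C. Dom C f \<in> Obj C \<and> Cod C f \<in> Obj C) \<and>
     (\<forall>x\<in>Obj C. Id C x \<in> Mor C \<and> Dom C (Id C x) = x \<and> Cod C (Id C x) = x) \<and>
     (\<forall>f\<in>Mor C. \<forall>g\<in>Mor C. Cod C f = Dom C g \<longrightarrow>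
        Comp C g f \<in> Mor C \<and> Dom C (Comp C g f) = Dom C f \<and> Cod C (Comp C g f) = Cod C g) \<and>
     (\<forall>f\<in>Mor C. Comp C f (Id C (Dom C f)) = f \<and> Comp C (Id C (Cod C f)) f = f) \<and>
     (\<forall>f\<in>Mor C. \<forall>g\<in>Mor C. \<forall>h\<in>Mor C. Cod C f = Dom C g \<and> Cod C g = Dom C h \<longrightarrow>
        Comp C h (Comp C g f) = Comp C (Comp C h g) f)"

definition is_identity :: "('o,'m) cat \<Rightarrow> 'm \<Rightarrow> bool" where
  "is_identity C f \<longleftrightarrow> (\<exists>x\<in>Obj C. f = Id C x)"

definition is_iso :: "('o,'m) cat \<Rightarrow> 'm \<Rightarrow> bool" where
  "is_iso C f \<longleftrightarrow> f \<in> Mor C \<and> (\<exists>g\<in>Mor C. Dom C g = Cod C f \<and> Cod C g = Dom C f \<and>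
      Comp C g f = Id C (Dom C f) \<and> Comp C f g = Id C (Cod C f))"

definition acyclic_category :: "('o,'m) cat \<Rightarrow> bool" where
  "acyclic_category C \<longleftrightarrow> category C \<and>
     (\<forall>f\<in>Mor C. is_iso C f \<longrightarrow> is_identity C f) \<and>
     (\<forall>f\<in>Mor C. Dom C f = Cod C f \<longrightarrow> is_identity C f)"

definition finite_category :: "('o,'m) cat \<Rightarrow> bool" where
  "finite_category C \<longleftrightarrow> finite (Mor C)"

definition is_functor :: "('o,'m) cat \<Rightarrow> ('p,'n) cat \<Rightarrow> ('o \<Rightarrow> 'p) \<Rightarrow> ('m \<Rightarrow> 'n) \<Rightarrow> bool" where
  "is_functor C D Fo Fm \<longleftrightarrow>
     (\<forall>x\<in>Obj C. Fo x \<in> Obj D \<and> Fm (Id C x) = Id D (Fo x)) \<and>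
     (\<forall>f\<in>Mor C. Fm f \<in> Mor D \<and> Dom D (Fm f) = Fo (Dom C f) \<and> Cod D (Fm f) = Fo (Cod C f)) \<and>
     (\<forall>f\<in>Mor C. \<forall>g\<in>Mor C. Cod C f = Dom C g \<longrightarrow> Fm (Comp C g f) = Comp D (Fm g) (Fm f))"

text \<open>Simplices of the nerve: a chain x0 --a1--> x1 ... --ak--> xk, represented as the pair
  (x0, [a1,...,ak]) of composable non-identity morphisms (k = 0 gives the object x0).\<close>
type_synonym ('o,'m) simplex = "'o \<times> 'm list"

definition is_simplex :: "('o,'m) cat \<Rightarrow> ('o,'m) simplex \<Rightarrow> bool" where
  "is_simplex C s \<longleftrightarrow> (case s of (x, as) \<Rightarrow>
     x \<in> Obj C \<and> set as \<subseteq> Mor C \<and> (\<forall>a\<in>set as. \<not> is_identity C a) \<and>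
     (as \<noteq> [] \<longrightarrow> Dom C (hd as) = x) \<and>
     (\<forall>i. Suc i < length as \<longrightarrow> Cod C (as ! i) = Dom C (as ! Suc i)))"

definition vert :: "('o,'m) cat \<Rightarrow> ('o,'m) simplex \<Rightarrow> nat \<Rightarrow> 'o" where
  "vert C s i = (if i = 0 then fst s else Cod C (snd s ! (i - 1)))"

definition comp_list :: "('o,'m) cat \<Rightarrow> 'm list \<Rightarrow> 'm" where
  "comp_list C as = foldl (\<lambda>acc b. Comp C b acc) (hd as) (tl as)"

text \<open>The face spanned by the vertices with indices is = [i0 < i1 < ... < im]:
  consecutive chosen vertices are joined by the composite of the morphisms between them.\<close>
definition face :: "('o,'m) cat \<Rightarrow> ('o,'m) simplex \<Rightarrow> nat list \<Rightarrow> ('o,'m) simplex" where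
  "face C s is = (vert C s (hd is),
     map (\<lambda>l. comp_list C (take (is ! Suc l - is ! l) (drop (is ! l) (snd s)))) [0..<length is - 1])"

text \<open>The order of sd(C): tau \<le> sigma iff tau is a face of sigma, i.e. obtained by choosing a
  nonempty subset of the vertices of sigma.\<close>
definition sd_le :: "('o,'m) cat \<Rightarrow> ('o,'m) simplex \<Rightarrow> ('o,'m) simplex \<Rightarrow> bool" where
  "sd_le C \<tau> \<sigma> \<longleftrightarrow> (\<exists>S. S \<noteq> {} \<and> S \<subseteq> {0..length (snd \<sigma>)} \<and>
      \<tau> = face C \<sigma> (sorted_list_of_set S))"

text \<open>sd(F): image chain F(x0) --F(a1)--> ... --F(ak)--> F(xk), taken as the (nondegenerate)
  simplex it determines, i.e. with identity morphisms removed.\<close>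
definition sd_map :: "('o,'m) cat \<Rightarrow> ('o \<Rightarrow> 'o) \<Rightarrow> ('m \<Rightarrow> 'm) \<Rightarrow> ('o,'m) simplex \<Rightarrow> ('o,'m) simplex" where
  "sd_map C Fo Fm s = (Fo (fst s), filter (\<lambda>a. \<not> is_identity C a) (map Fm (snd s)))"

end

theory Submission
  imports Defs
begin

text \<open>Every edge of a face of \<open>\<sigma>\<close> is the composite of a nonempty run of consecutive edges of
  \<open>\<sigma>\<close>. If \<open>sd(F)\<close> fixes \<open>\<sigma>\<close>, no edge of \<open>\<sigma>\<close> is sent to an identity (otherwise it would be
  deleted and \<open>sd(F)(\<sigma>)\<close> would be shorter), so \<open>F\<close> fixes every edge and hence every composite
  of edges and every vertex. It remains to see that those composites are not identities:
  if \<open>g \<circ> a = id\<close>, then \<open>a \<circ> g\<close> is an endomorphism, hence an identity in an acyclic category,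
  so \<open>a\<close> is an isomorphism and thus itself an identity.\<close>

fun composable :: "('o,'m) cat \<Rightarrow> 'm list \<Rightarrow> bool" where
  "composable C [] = True"
| "composable C [a] = (a \<in> Mor C)"
| "composable C (a # b # bs) = (a \<in> Mor C \<and> Cod C a = Dom C b \<and> composable C (b # bs))"

lemma composable_iff_nth:
  "composable C bs \<longleftrightarrow> set bs \<subseteq> Mor C \<and>
     (\<forall>i. Suc i < length bs \<longrightarrow> Cod C (bs ! i) = Dom C (bs ! Suc i))"
proof (induction C bs rule: composable.induct)
  case (3 C a b bs)
  have all_nat_split: "(\<forall>i. Q i) \<longleftrightarrow> Q 0 \<and> (\<forall>i. Q (Suc i))" for Q :: "nat \<Rightarrow> bool"
    by (metis nat.exhaust)
  show ?case
    by (subst all_nat_split) (use 3 in auto)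
qed auto

lemma composable_take_drop: "composable C bs \<Longrightarrow> composable C (take n (drop m bs))"
  unfolding composable_iff_nth
  by (auto dest: in_set_takeD in_set_dropD simp: nth_take nth_drop)

lemma composable_ConsD: "composable C (a # bs) \<Longrightarrow> a \<in> Mor C"
  by (cases bs) auto

lemma comp_list_single [simp]: "comp_list C [a] = a"
  by (simp add: comp_list_def)

lemma comp_list_Cons_Cons: "comp_list C (a # b # bs) = comp_list C (Comp C b a # bs)"
  by (simp add: comp_list_def)

lemma comp_closed:
  assumes "category C" "a \<in> Mor C" "b \<in> Mor C" "Cod C a = Dom C b"
  shows "Comp C b a \<in> Mor C" "Dom C (Comp C b a) = Dom C a" "Cod C (Comp C b a) = Cod C b"
  using assms unfolding category_def by auto

lemma composable_Cons_Cons_comp: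
  assumes "category C" "composable C (a # b # bs)"
  shows "composable C (Comp C b a # bs)"
  using assms comp_closed[OF assms(1)] composable_ConsD[of C b bs] by (cases bs) auto

lemma comp_list_closed:
  assumes "category C"
  shows "composable C (a # bs) \<Longrightarrow> comp_list C (a # bs) \<in> Mor C
    \<and> Dom C (comp_list C (a # bs)) = Dom C a \<and> Cod C (comp_list C (a # bs)) = Cod C (last (a # bs))"
proof (induction bs arbitrary: a)
  case (Cons b bs)
  have "b \<in> Mor C" using Cons.prems composable_ConsD by auto
  then have "Dom C (Comp C b a) = Dom C a" "Cod C (Comp C b a) = Cod C b"
    using Cons.prems comp_closed[OF assms(1)] by auto
  then show ?case
    using Cons.IH[OF composable_Cons_Cons_comp[OF assms(1) Cons.prems]]
    by (simp add: comp_list_Cons_Cons)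
qed simp

lemma comp_list_Cons:
  assumes "category C" "composable C (a # b # bs)"
  shows "comp_list C (a # b # bs) = Comp C (comp_list C (b # bs)) a"
  using assms(2)
proof (induction bs arbitrary: b)
  case (Cons c bs)
  have a: "a \<in> Mor C" "Cod C a = Dom C b" and b: "b \<in> Mor C" "Cod C b = Dom C c"
    and c: "c \<in> Mor C"
    using Cons.prems composable_ConsD by auto
  have bc: "composable C (Comp C c b # bs)"
    using Cons.prems composable_Cons_Cons_comp[OF assms(1)] by auto
  have "comp_list C (a # b # c # bs) = comp_list C (Comp C (Comp C c b) a # bs)"
    using assms(1) a b c unfolding category_def by (simp add: comp_list_Cons_Cons)
  also have "\<dots> = Comp C (comp_list C (Comp C c b # bs)) a"
    using Cons.IH[of "Comp C c b"] bc a b c comp_closed[OF assms(1)]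
    by (simp add: comp_list_Cons_Cons)
  finally show ?case by (simp add: comp_list_Cons_Cons)
qed (simp add: comp_list_Cons_Cons)

lemma functor_comp_list:
  assumes "is_functor C D Fo Fm" "category C" "composable C (a # bs)"
  shows "Fm (comp_list C (a # bs)) = comp_list D (map Fm (a # bs))"
  using assms(3)
proof (induction bs arbitrary: a)
  case (Cons b bs)
  have "a \<in> Mor C" "b \<in> Mor C" "Cod C a = Dom C b"
    using Cons.prems composable_ConsD by auto
  then have "Fm (Comp C b a) = Comp D (Fm b) (Fm a)"
    using assms(1) unfolding is_functor_def by auto
  then show ?case
    using Cons.IH[OF composable_Cons_Cons_comp[OF assms(2) Cons.prems]]
    by (simp add: comp_list_Cons_Cons)
qed simp

lemma acyclic_comp_is_identityD:
  assumes ac: "acyclic_category C" and a: "a \<in> Mor C" and g: "g \<in> Mor C"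
    and ag: "Cod C a = Dom C g" and id: "is_identity C (Comp C g a)"
  shows "is_identity C a"
proof -
  have cat: "category C" using ac unfolding acyclic_category_def by simp
  have id_dom_cod: "Dom C (Id C x) = x" "Cod C (Id C x) = x" if "x \<in> Obj C" for x
    using cat that unfolding category_def by auto
  have ga: "Comp C g a \<in> Mor C" "Dom C (Comp C g a) = Dom C a" "Cod C (Comp C g a) = Cod C g"
    using comp_closed[OF cat a g ag] .
  obtain x where "x \<in> Obj C" "Comp C g a = Id C x"
    using id unfolding is_identity_def by auto
  then have g_a: "Comp C g a = Id C (Dom C a)" and gd: "Cod C g = Dom C a"
    using ga id_dom_cod by auto
  have "Comp C a g \<in> Mor C" "Dom C (Comp C a g) = Cod C a" "Cod C (Comp C a g) = Cod C a"
    using comp_closed[OF cat g a gd] ag by auto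
  then obtain y where "y \<in> Obj C" "Comp C a g = Id C y"
    using ac unfolding acyclic_category_def is_identity_def by auto
  then have a_g: "Comp C a g = Id C (Cod C a)"
    using \<open>Dom C (Comp C a g) = Cod C a\<close> id_dom_cod by auto
  have "is_iso C a"
    unfolding is_iso_def using a g ag gd g_a a_g by auto
  then show ?thesis
    using ac a unfolding acyclic_category_def by auto
qed

lemma acyclic_comp_list_not_identity:
  assumes ac: "acyclic_category C" and bs: "composable C (a # bs)"
    and a: "\<not> is_identity C a"
  shows "\<not> is_identity C (comp_list C (a # bs))"
proof (cases bs)
  case (Cons b bs')
  have cat: "category C" using ac unfolding acyclic_category_def by simp
  have rest: "composable C (b # bs')" and "a \<in> Mor C" "Cod C a = Dom C b"
    using bs Cons composable_ConsD by auto
  moreover have "comp_list C (a # bs) = Comp C (comp_list C (b # bs')) a"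
    using comp_list_Cons[OF cat] bs Cons by simp
  ultimately show ?thesis
    using comp_list_closed[OF cat rest] acyclic_comp_is_identityD[OF ac] a by auto
qed (use a in simp)

lemma functor_vert:
  assumes "is_functor C D Fo Fm" "set as \<subseteq> Mor C" "i \<le> length as"
  shows "Fo (vert C (x, as) i) = vert D (Fo x, map Fm as) i"
proof (cases i)
  case (Suc j)
  then have "as ! j \<in> Mor C" using assms(2,3) by auto
  then show ?thesis
    using assms(1,3) Suc unfolding vert_def is_functor_def by auto
qed (simp add: vert_def)

lemma sd_map_fixed_iff:
  assumes "\<forall>a\<in>set as. \<not> is_identity C a"
  shows "sd_map C Fo Fm (x, as) = (x, as) \<longleftrightarrow> Fo x = x \<and> map Fm as = as"
proof
  assume fixed: "sd_map C Fo Fm (x, as) = (x, as)"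
  then have flt: "filter (\<lambda>a. \<not> is_identity C a) (map Fm as) = as"
    unfolding sd_map_def by simp
  then have "length (filter (\<lambda>a. \<not> is_identity C a) (map Fm as)) = length (map Fm as)"
    by simp
  then have "filter (\<lambda>a. \<not> is_identity C a) (map Fm as) = map Fm as"
    using length_filter_less[of _ "map Fm as"] unfolding filter_id_conv by force
  then show "Fo x = x \<and> map Fm as = as"
    using fixed flt unfolding sd_map_def by simp
qed (use assms in \<open>simp add: sd_map_def filter_id_conv\<close>)

lemma face_edge_nonempty:
  assumes "sorted_wrt (<) is" "set is \<subseteq> {0..length as}" "l < length is - 1"
  shows "take (is ! Suc l - is ! l) (drop (is ! l) as) \<noteq> []"
proof -
  have "is ! l < is ! Suc l"
    using sorted_wrt_nth_less[OF assms(1), of l "Suc l"] assms(3) by simp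
  moreover have "is ! Suc l \<in> set is"
    using assms(3) by simp
  then have "is ! Suc l \<le> length as"
    using assms(2) by auto
  ultimately show ?thesis by auto
qed

lemma sd_map_fixes_face:
  assumes ac: "acyclic_category C" and F: "is_functor C C Fo Fm"
    and as: "composable C as" "\<forall>a\<in>set as. \<not> is_identity C a"
    and fixed: "Fo x = x" "map Fm as = as"
    and "is": "sorted_wrt (<) is" "is \<noteq> []" "set is \<subseteq> {0..length as}"
  shows "sd_map C Fo Fm (face C (x, as) is) = face C (x, as) is"
proof -
  have cat: "category C" using ac unfolding acyclic_category_def by simp
  define edge where "edge l = take (is ! Suc l - is ! l) (drop (is ! l) as)" for l
  have Fm_fixes: "Fm a = a" if "a \<in> set as" for a
    using fixed(2) that by (metis list.map_ident map_eq_conv)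
  have edge_fixed: "Fm (comp_list C (edge l)) = comp_list C (edge l)
      \<and> \<not> is_identity C (comp_list C (edge l))" if l: "l < length is - 1" for l
  proof -
    obtain a bs where ab: "edge l = a # bs"
      using face_edge_nonempty[OF "is"(1,3) l] unfolding edge_def by (metis list.exhaust)
    have sub: "set (a # bs) \<subseteq> set as"
      using ab unfolding edge_def by (metis set_drop_subset set_take_subset order_trans)
    have comp: "composable C (a # bs)"
      using composable_take_drop[OF as(1)] ab unfolding edge_def by metis
    have ab_fixed: "map Fm (a # bs) = a # bs"
      using Fm_fixes sub by (simp add: map_idI subset_iff)
    have "\<not> is_identity C a"
      using as(2) sub by simp
    then show ?thesis
      unfolding ab using functor_comp_list[OF F cat comp, unfolded ab_fixed]
        acyclic_comp_list_not_identity[OF ac comp] by simp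
  qed
  define edges where "edges = map (\<lambda>l. comp_list C (edge l)) [0..<length is - 1]"
  have face: "face C (x, as) is = (vert C (x, as) (hd is), edges)"
    unfolding face_def edges_def edge_def by simp
  have "hd is \<le> length as"
    using "is"(2,3) by (meson atLeastAtMost_iff hd_in_set subsetD)
  then have "Fo (vert C (x, as) (hd is)) = vert C (x, as) (hd is)"
    using functor_vert[OF F, of as "hd is" x] as(1) fixed unfolding composable_iff_nth by simp
  moreover have "\<forall>e\<in>set edges. Fm e = e \<and> \<not> is_identity C e"
    using edge_fixed unfolding edges_def by simp
  ultimately show ?thesis
    unfolding face using sd_map_fixed_iff[of edges C Fo Fm] by (simp add: map_idI)
qed

theorem mainTheorem2:
  fixes C :: "('o,'m) cat" and Fo :: "'o \<Rightarrow> 'o" and Fm :: "'m \<Rightarrow> 'm"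
    and \<sigma> \<tau> :: "('o,'m) simplex"
  assumes "acyclic_category C" and "finite_category C"
    and "is_functor C C Fo Fm"
    and "is_simplex C \<sigma>"
    and "sd_map C Fo Fm \<sigma> = \<sigma>"
    and "sd_le C \<tau> \<sigma>"
  shows "sd_map C Fo Fm \<tau> = \<tau>"
proof -
  obtain x as where \<sigma>: "\<sigma> = (x, as)" by (cases \<sigma>)
  have as: "composable C as" "\<forall>a\<in>set as. \<not> is_identity C a"
    using assms(4) unfolding is_simplex_def \<sigma> composable_iff_nth by auto
  have fixed: "Fo x = x" "map Fm as = as"
    using assms(5) sd_map_fixed_iff[OF as(2)] unfolding \<sigma> by auto
  obtain S where S: "S \<noteq> {}" "S \<subseteq> {0..length as}"
    and \<tau>: "\<tau> = face C (x, as) (sorted_list_of_set S)"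
    using assms(6) unfolding sd_le_def \<sigma> by auto
  have "finite S" using S(2) finite_subset by blast
  then show ?thesis
    unfolding \<tau> using sd_map_fixes_face[OF assms(1,3) as fixed] S by simp
qed

end
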